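(* Let $s\in\mathbb{R}$ and let $f:\mathbb{R}^n\to(-\infty,\infty]$ be lsc and variationally $s$-convex at $\bar x\in\operatorname{dom}f$ for $\bar x^*\in\partial f(\bar x)$. Then for every $t\in\mathbb{R}$ and every $y^*\in\mathbb{R}^n$ the function $\psi:=f+\langle y^*,\cdot-\bar x\rangle+\frac t2\|\cdot-\bar x\|^2$ is variationally $(s+t)$-convex at $\bar x$ for $\bar x^*+y^*$. Moreover, if $\widehat f$, $U$, $V$, $\rho$ are an lsc function, open convex neighborhood and number certifying variational $s$-convexity of $f$ at $\bar x$ for $\bar x^*$ (as in the definition), then variational $(s+t)$-convexity of $\psi$ at $\bar x$ for $\bar x^*+y^*$ can be certified by the function $\widehat\psi:=\widehat f+\langle y^*,\cdot-\bar x\rangle+\frac t2\|\cdot-\bar x\|^2$ together with a suitable open convex neighborhood $\widehat U\times\widehat V$ of $(\bar x,\bar x^*+y^* )$ and some $\widehat\rho>\psi(\bar x)=f(\bar x)$.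
   Context: Limiting subdifferential $\partial f(x)$: all $x^*$ with $x_k\to x$, $f(x_k)\to f(x)$, $x_k^*\to x^*$, $x_k^*\in\widehat\partial f(x_k)$, where $\widehat\partial f(x)=\{x^*\mid\liminf_{y\to x}\frac{f(y)-f(x)-\langle x^*,y-x\rangle}{\|y-x\|}\ge0\}$. $\operatorname{gph}_\rho\partial f=\{(x,x^* )\in\operatorname{gph}\partial f\mid f(x)<\rho\}$. An lsc function $f$ is variationally $s$-convex at $\bar x\in\operatorname{dom}f$ for $\bar x^*\in\partial f(\bar x)$ if there exist an open convex neighborhood $U\times V$ of $(\bar x,\bar x^* )$, an lsc function $\widehat f$ and $\rho>f(\bar x)$ such that $\widehat f-\frac s2\|\cdot\|^2$ is convex on $U$, $\widehat f\le f$ on $U$, $\operatorname{gph}_\rho\partial f\cap(U\times V)=\operatorname{gph}\partial\widehat f\cap(U\times V)$ and $f(x)=\widehat f(x)$ at the common elements $(x,x^* )$; such $\widehat f,U,V,\rho$ are said to certify the property. *)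

theory Defs
  imports "HOL-Analysis.Analysis" "HOL-Library.Extended_Real"
begin

definition lsc :: "('a::euclidean_space \<Rightarrow> ereal) \<Rightarrow> bool" where
  "lsc f \<longleftrightarrow> (\<forall>x. f x \<le> Liminf (at x) f)"

definition dom_fn :: "('a::euclidean_space \<Rightarrow> ereal) \<Rightarrow> 'a set" where
  "dom_fn f = {x. f x < \<infinity>}"

definition ereal_convex_on :: "'a::euclidean_space set \<Rightarrow> ('a \<Rightarrow> ereal) \<Rightarrow> bool" where
  "ereal_convex_on U g \<longleftrightarrow>
     (\<forall>x\<in>U. \<forall>y\<in>U. \<forall>l::real. 0 \<le> l \<and> l \<le> 1 \<longrightarrow>
        g (l *\<^sub>R x + (1 - l) *\<^sub>R y) \<le> ereal l * g x + ereal (1 - l) * g y)"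

definition regular_subdiff :: "('a::euclidean_space \<Rightarrow> ereal) \<Rightarrow> 'a \<Rightarrow> 'a set" where
  "regular_subdiff f x =
     (if \<bar>f x\<bar> = \<infinity> then {} else
      {xs. Liminf (at x) (\<lambda>y. (f y - f x - ereal (inner xs (y - x))) / ereal (norm (y - x))) \<ge> 0})"

definition limiting_subdiff :: "('a::euclidean_space \<Rightarrow> ereal) \<Rightarrow> 'a \<Rightarrow> 'a set" where
  "limiting_subdiff f x =
     (if \<bar>f x\<bar> = \<infinity> then {} else
      {xs. \<exists>xk xsk. xk \<longlonglongrightarrow> x \<and> (\<lambda>k. f (xk k)) \<longlonglongrightarrow> f x \<and> xsk \<longlonglongrightarrow> xs \<and>
                   (\<forall>k. xsk k \<in> regular_subdiff f (xk k))})"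

definition gph_subdiff :: "('a::euclidean_space \<Rightarrow> ereal) \<Rightarrow> ('a \<times> 'a) set" where
  "gph_subdiff f = {(x, xs). xs \<in> limiting_subdiff f x}"

definition gph_rho_subdiff :: "('a::euclidean_space \<Rightarrow> ereal) \<Rightarrow> real \<Rightarrow> ('a \<times> 'a) set" where
  "gph_rho_subdiff f \<rho> = {(x, xs). xs \<in> limiting_subdiff f x \<and> f x < ereal \<rho>}"

definition certifies_var_convex ::
  "real \<Rightarrow> ('a::euclidean_space \<Rightarrow> ereal) \<Rightarrow> 'a \<Rightarrow> 'a \<Rightarrow> ('a \<Rightarrow> ereal) \<Rightarrow> 'a set \<Rightarrow> 'a set \<Rightarrow> real \<Rightarrow> bool" where
  "certifies_var_convex s f xb xbs fh U V \<rho> \<longleftrightarrow>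
     open U \<and> convex U \<and> open V \<and> convex V \<and> xb \<in> U \<and> xbs \<in> V \<and>
     lsc fh \<and> (\<forall>x. fh x \<noteq> -\<infinity>) \<and>
     ereal_convex_on U (\<lambda>x. fh x - ereal (s / 2 * (norm x)\<^sup>2)) \<and>
     (\<forall>x\<in>U. fh x \<le> f x) \<and>
     ereal \<rho> > f xb \<and>
     gph_rho_subdiff f \<rho> \<inter> (U \<times> V) = gph_subdiff fh \<inter> (U \<times> V) \<and>
     (\<forall>(x, xs) \<in> gph_rho_subdiff f \<rho> \<inter> (U \<times> V). f x = fh x)"

definition var_convex :: "real \<Rightarrow> ('a::euclidean_space \<Rightarrow> ereal) \<Rightarrow> 'a \<Rightarrow> 'a \<Rightarrow> bool" where
  "var_convex s f xb xbs \<longleftrightarrow>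
     lsc f \<and> xb \<in> dom_fn f \<and> xbs \<in> limiting_subdiff f xb \<and>
     (\<exists>fh U V \<rho>. certifies_var_convex s f xb xbs fh U V \<rho>)"

end

theory Submission
  imports Defs
begin

(* Adding a C^1 function g to f shifts regular and limiting subgradients by the gradient of g
   (the remainder of its first-order expansion is o(|y - x|)), preserves lower semicontinuity,
   and raises the convexity modulus of a certificate by t as soon as g - t/2 |.|^2 is convex.
   The tilt <y*, x - xb> + t/2 |x - xb|^2 is such a g, with gradient y* at xb.
   The only delicate point is the level rho. By the quadratic minorant of the s-convex
   certificate fh at xb, every x near xb carrying a limiting subgradient of fh near xbs has
   fh x only slightly above f xb; since g is also nearly constant there, on small enough
   neighbourhoods the level f xb + g xb + (rho - f xb) / 2 works in both directions of the
   graph equality. *)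

definition diff_quotient :: "('a::euclidean_space \<Rightarrow> ereal) \<Rightarrow> 'a \<Rightarrow> 'a \<Rightarrow> 'a \<Rightarrow> ereal" where
  "diff_quotient h x xs y = (h y - h x - ereal (inner xs (y - x))) / ereal (norm (y - x))"

lemma regular_subdiff_iff:
  "xs \<in> regular_subdiff h x \<longleftrightarrow> \<bar>h x\<bar> \<noteq> \<infinity> \<and> 0 \<le> Liminf (at x) (diff_quotient h x xs)"
  unfolding regular_subdiff_def diff_quotient_def by simp

lemma limiting_subdiff_finite: "xs \<in> limiting_subdiff h x \<Longrightarrow> \<bar>h x\<bar> \<noteq> \<infinity>"
  unfolding limiting_subdiff_def by (simp split: if_splits)

lemma Liminf_add_tendsto_ge:
  fixes G :: "'b \<Rightarrow> ereal" and k :: "'b \<Rightarrow> real"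
  assumes G: "a \<le> Liminf F G" and k: "(k \<longlongrightarrow> l) F"
  shows "a + ereal l \<le> Liminf F (\<lambda>y. G y + ereal (k y))"
  unfolding le_Liminf_iff
proof (intro allI impI)
  fix c assume "c < a + ereal l"
  then obtain z where cz: "c < ereal z" and za: "ereal z < a + ereal l"
    using ereal_dense2 by blast
  have "ereal (z - l) < a"
    using za by (cases a) auto
  then obtain w where zw: "z - l < w" and wa: "ereal w < a"
    using ereal_dense2 by force
  have "eventually (\<lambda>y. ereal w < G y) F"
    using G wa unfolding le_Liminf_iff by blast
  moreover have "eventually (\<lambda>y. z - w < k y) F"
    using order_tendstoD(1)[OF k] zw by simp
  ultimately show "eventually (\<lambda>y. c < G y + ereal (k y)) F"
  proof eventually_elim
    case (elim y)
    then have "ereal z < G y + ereal (k y)"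
      by (cases "G y") auto
    with cz show ?case
      by (rule order.strict_trans)
  qed
qed

lemma lsc_add_continuous:
  assumes "lsc h" and "\<And>x. isCont g x"
  shows "lsc (\<lambda>x. h x + ereal (g x))"
  unfolding lsc_def
proof
  fix x
  show "h x + ereal (g x) \<le> Liminf (at x) (\<lambda>y. h y + ereal (g y))"
    using assms by (intro Liminf_add_tendsto_ge) (auto simp: lsc_def isCont_def)
qed

lemma regular_subdiff_add_smooth:
  assumes g: "(g has_derivative (\<lambda>v. inner G v)) (at x)"
    and xs: "xs \<in> regular_subdiff h x"
  shows "xs + G \<in> regular_subdiff (\<lambda>y. h y + ereal (g y)) x"
proof -
  obtain hx where hx: "h x = ereal hx"
    using xs by (cases "h x") (auto simp: regular_subdiff_iff)
  define rem where "rem y = (g y - g x - inner G (y - x)) / norm (y - x)" for y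
  have "((\<lambda>y. \<bar>rem y\<bar>) \<longlongrightarrow> 0) (at x)"
    using g unfolding has_derivative_iff_norm rem_def by (simp add: abs_divide)
  then have rem: "(rem \<longlongrightarrow> 0) (at x)"
    by (simp add: tendsto_rabs_zero_iff)
  have quotient_eq: "diff_quotient (\<lambda>y. h y + ereal (g y)) x (xs + G) y
      = diff_quotient h x xs y + ereal (rem y)" if "y \<noteq> x" for y
    using that hx by (cases "h y") (auto simp: diff_quotient_def rem_def inner_add_left field_simps)
  have "0 + ereal 0 \<le> Liminf (at x) (\<lambda>y. diff_quotient h x xs y + ereal (rem y))"
    using xs rem by (intro Liminf_add_tendsto_ge) (auto simp: regular_subdiff_iff)
  also have "\<dots> = Liminf (at x) (diff_quotient (\<lambda>y. h y + ereal (g y)) x (xs + G))"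
    by (intro Liminf_eq) (simp add: eventually_at_filter quotient_eq)
  finally show ?thesis
    using hx by (simp add: regular_subdiff_iff)
qed

lemma limiting_subdiff_add_smooth_mono:
  assumes g: "\<And>y. (g has_derivative (\<lambda>v. inner (G y) v)) (at y)"
    and G: "isCont G x"
    and xs: "xs \<in> limiting_subdiff h x"
  shows "xs + G x \<in> limiting_subdiff (\<lambda>y. h y + ereal (g y)) x"
proof -
  have hx: "\<bar>h x\<bar> \<noteq> \<infinity>"
    using limiting_subdiff_finite[OF xs] .
  obtain xk xsk where xk: "xk \<longlonglongrightarrow> x" and hk: "(\<lambda>k. h (xk k)) \<longlonglongrightarrow> h x"
    and xsk: "xsk \<longlonglongrightarrow> xs" and reg: "\<And>k. xsk k \<in> regular_subdiff h (xk k)"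
    using xs hx by (auto simp: limiting_subdiff_def)
  have "isCont g x"
    using has_derivative_continuous[OF g] .
  then have "(\<lambda>k. h (xk k) + ereal (g (xk k))) \<longlonglongrightarrow> h x + ereal (g x)"
    by (intro tendsto_add_ereal_general1 hk tendsto_ereal isCont_tendsto_compose[OF _ xk]) auto
  moreover have "(\<lambda>k. xsk k + G (xk k)) \<longlonglongrightarrow> xs + G x"
    by (intro tendsto_add xsk isCont_tendsto_compose[OF G xk])
  moreover have "xsk k + G (xk k) \<in> regular_subdiff (\<lambda>y. h y + ereal (g y)) (xk k)" for k
    using regular_subdiff_add_smooth[OF g reg] .
  moreover have "\<bar>h x + ereal (g x)\<bar> \<noteq> \<infinity>"
    using hx by (cases "h x") auto
  ultimately show ?thesis
    using xk unfolding limiting_subdiff_def by auto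
qed

lemma ereal_add_real_cancel: "a + ereal r + ereal (- r) = a"
  by (cases a) auto

lemma limiting_subdiff_add_smooth:
  assumes g: "\<And>y. (g has_derivative (\<lambda>v. inner (G y) v)) (at y)"
    and G: "isCont G x"
  shows "limiting_subdiff (\<lambda>y. h y + ereal (g y)) x = {xs. xs - G x \<in> limiting_subdiff h x}"
proof (intro set_eqI iffI; clarsimp)
  fix xs
  assume xs: "xs \<in> limiting_subdiff (\<lambda>y. h y + ereal (g y)) x"
  have "((\<lambda>y. - g y) has_derivative (\<lambda>v. inner (- G y) v)) (at y)" for y
    using has_derivative_minus[OF g] by simp
  from limiting_subdiff_add_smooth_mono[OF this isCont_minus[OF G] xs]
  show "xs - G x \<in> limiting_subdiff h x"
    by (simp add: ereal_add_real_cancel)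
next
  fix xs
  assume "xs - G x \<in> limiting_subdiff h x"
  then show "xs \<in> limiting_subdiff (\<lambda>y. h y + ereal (g y)) x"
    using limiting_subdiff_add_smooth_mono[OF g G] by fastforce
qed

lemma has_derivative_quadratic_tilt:
  "((\<lambda>y. inner a (y - b) + q / 2 * (norm (y - b))\<^sup>2) has_derivative
     (\<lambda>v. inner (a + q *\<^sub>R (y - b)) v)) (at y)"
  unfolding power2_norm_eq_inner
  by (auto intro!: derivative_eq_intros simp: inner_add_left inner_commute algebra_simps)

lemma convex_on_quadratic_tilt_minus_sq:
  assumes "convex S"
  shows "convex_on S (\<lambda>y. inner a (y - b) + q / 2 * (norm (y - b))\<^sup>2 - q / 2 * (norm y)\<^sup>2)"
proof -
  define c d where "c = a - q *\<^sub>R b" and "d = q / 2 * (norm b)\<^sup>2 - inner a b"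
  have affine: "inner a (y - b) + q / 2 * (norm (y - b))\<^sup>2 - q / 2 * (norm y)\<^sup>2
      = inner c y + d" for y
    unfolding c_def d_def power2_norm_eq_inner by (simp add: inner_diff inner_commute algebra_simps)
  have "convex_on S (\<lambda>y. inner c y + d)"
    using assms by (intro convex_onI) (auto simp: inner_add_right algebra_simps)
  then show ?thesis
    unfolding affine .
qed

lemma ereal_convex_on_subset:
  "ereal_convex_on U F \<Longrightarrow> W \<subseteq> U \<Longrightarrow> ereal_convex_on W F"
  unfolding ereal_convex_on_def by blast

lemma ereal_convex_on_add_convex_on:
  assumes F: "ereal_convex_on U F" and F_fin: "\<And>x. x \<in> U \<Longrightarrow> F x \<noteq> -\<infinity>"
    and A: "convex_on U A"
  shows "ereal_convex_on U (\<lambda>x. F x + ereal (A x))"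
  unfolding ereal_convex_on_def
proof (intro ballI allI impI)
  fix x y and l :: real
  assume x: "x \<in> U" and y: "y \<in> U" and l: "0 \<le> l \<and> l \<le> 1"
  let ?z = "l *\<^sub>R x + (1 - l) *\<^sub>R y"
  have "F ?z + ereal (A ?z)
      \<le> (ereal l * F x + ereal (1 - l) * F y) + ereal (l * A x + (1 - l) * A y)"
  proof (rule add_mono)
    show "F ?z \<le> ereal l * F x + ereal (1 - l) * F y"
      using F x y l unfolding ereal_convex_on_def by blast
    show "ereal (A ?z) \<le> ereal (l * A x + (1 - l) * A y)"
      using A x y l unfolding convex_on_alt by simp
  qed
  also have "\<dots> = ereal l * (F x + ereal (A x)) + ereal (1 - l) * (F y + ereal (A y))"
    using F_fin[OF x] F_fin[OF y] l
    by (cases "F x"; cases "F y"; cases "l = 0"; cases "l = 1") (auto simp: algebra_simps)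
  finally show "F ?z + ereal (A ?z)
      \<le> ereal l * (F x + ereal (A x)) + ereal (1 - l) * (F y + ereal (A y))" .
qed

lemma ereal_convex_on_minus_sq_add:
  assumes h: "ereal_convex_on U (\<lambda>x. h x - ereal (s / 2 * (norm x)\<^sup>2))"
    and h_proper: "\<And>x. x \<in> U \<Longrightarrow> h x \<noteq> -\<infinity>"
    and g: "convex_on U (\<lambda>x. g x - t / 2 * (norm x)\<^sup>2)"
  shows "ereal_convex_on U (\<lambda>x. h x + ereal (g x) - ereal ((s + t) / 2 * (norm x)\<^sup>2))"
proof -
  have "ereal_convex_on U
      (\<lambda>x. (h x - ereal (s / 2 * (norm x)\<^sup>2)) + ereal (g x - t / 2 * (norm x)\<^sup>2))"
    using h_proper by (intro ereal_convex_on_add_convex_on[OF h _ g]) (simp add: minus_ereal_def)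
  moreover have "(h x - ereal (s / 2 * (norm x)\<^sup>2)) + ereal (g x - t / 2 * (norm x)\<^sup>2)
      = h x + ereal (g x) - ereal ((s + t) / 2 * (norm x)\<^sup>2)" for x
    by (cases "h x") (auto simp: algebra_simps add_divide_distrib)
  ultimately show ?thesis
    by simp
qed

lemma ereal_convex_on_diff_quotient_le:
  assumes H: "ereal_convex_on U H" and x: "x \<in> U" and z: "z \<in> U" and "z \<noteq> x"
    and Hx: "H x = ereal a" and Hz: "H z = ereal b" and l: "0 < l" "l \<le> 1"
  shows "diff_quotient H x w (x + l *\<^sub>R (z - x))
    \<le> ereal ((b - a - inner w (z - x)) / norm (z - x))"
proof -
  define n where "n = norm (z - x)"
  have n: "n > 0"
    using \<open>z \<noteq> x\<close> by (simp add: n_def)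
  have "x + l *\<^sub>R (z - x) = l *\<^sub>R z + (1 - l) *\<^sub>R x"
    by (simp add: algebra_simps)
  then have "H (x + l *\<^sub>R (z - x)) \<le> ereal l * H z + ereal (1 - l) * H x"
    using H x z l unfolding ereal_convex_on_def by simp
  then have "H (x + l *\<^sub>R (z - x)) \<le> ereal (l * b + (1 - l) * a)"
    by (simp add: Hx Hz)
  moreover have "r - a - l * inner w (z - x) \<le> (b - a - inner w (z - x)) / n * (l * n)"
    if "r \<le> l * b + (1 - l) * a" for r
  proof -
    have "(b - a - inner w (z - x)) / n * (l * n) = l * (b - a - inner w (z - x))"
      using n by simp
    then show ?thesis
      using that by (simp add: algebra_simps)
  qed
  ultimately show ?thesis
    using l n Hx
    by (cases "H (x + l *\<^sub>R (z - x))") (auto simp: diff_quotient_def n_def pos_divide_le_eq)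
qed

lemma ereal_convex_on_regular_subgradient:
  assumes H: "ereal_convex_on U H" and x: "x \<in> U" and z: "z \<in> U" and Hz: "H z \<noteq> -\<infinity>"
    and w: "w \<in> regular_subdiff H x"
  shows "H x + ereal (inner w (z - x)) \<le> H z"
proof (cases "H z = \<infinity> \<or> z = x")
  case True
  then show ?thesis by auto
next
  case False
  obtain a b where a: "H x = ereal a" and b: "H z = ereal b"
    using w False Hz by (cases "H x"; cases "H z") (auto simp: regular_subdiff_iff)
  define D where "D = (b - a - inner w (z - x)) / norm (z - x)"
  define y where "y l = x + l *\<^sub>R (z - x)" for l :: real
  have y_lim: "filterlim y (at x) (at_right 0)"
  proof -
    have "(y \<longlongrightarrow> x + 0 *\<^sub>R (z - x)) (at_right 0)"
      unfolding y_def by (intro tendsto_intros)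
    moreover have "eventually (\<lambda>l. y l \<noteq> x) (at_right 0)"
      using eventually_at_right_less[of 0] by eventually_elim (use False in \<open>auto simp: y_def\<close>)
    ultimately show ?thesis
      by (simp add: filterlim_at)
  qed
  have "c < ereal D" if "c < 0" for c
  proof -
    have "eventually (\<lambda>v. c < diff_quotient H x w v) (at x)"
      using w that unfolding regular_subdiff_iff le_Liminf_iff by auto
    then have "eventually (\<lambda>l. c < diff_quotient H x w (y l)) (at_right 0)"
      using y_lim by (rule eventually_compose_filterlim)
    moreover have "eventually (\<lambda>l. 0 < l \<and> l \<le> 1) (at_right (0::real))"
      unfolding eventually_at_right_field by (intro exI[of _ 1]) auto
    ultimately have "eventually (\<lambda>l. c < diff_quotient H x w (y l) \<and> 0 < l \<and> l \<le> 1) (at_right 0)"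
      by (rule eventually_conj)
    then obtain l where "c < diff_quotient H x w (y l)" "0 < l" "l \<le> 1"
      using eventually_happens[of _ "at_right (0::real)"] by auto
    then show ?thesis
      using ereal_convex_on_diff_quotient_le[OF H x z _ a b, of l w] False
      by (auto simp: y_def D_def intro: order.strict_trans2)
  qed
  from this[of "ereal D"] have "0 \<le> D"
    by force
  then show ?thesis
    using False by (simp add: a b D_def zero_le_divide_iff)
qed

lemma regular_subgradient_quadratic_minorant:
  assumes cv: "ereal_convex_on U (\<lambda>x. h x - ereal (s / 2 * (norm x)\<^sup>2))"
    and x: "x \<in> U" and z: "z \<in> U" and hz: "h z \<noteq> -\<infinity>"
    and v: "v \<in> regular_subdiff h x"
  shows "h x + ereal (inner v (z - x) + s / 2 * (norm (z - x))\<^sup>2) \<le> h z"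
proof -
  let ?H = "\<lambda>y. h y - ereal (s / 2 * (norm y)\<^sup>2)"
  have "v + (0 + (- s) *\<^sub>R (x - 0))
      \<in> regular_subdiff (\<lambda>y. h y + ereal (inner 0 (y - 0) + - s / 2 * (norm (y - 0))\<^sup>2)) x"
    by (rule regular_subdiff_add_smooth[OF has_derivative_quadratic_tilt v])
  then have "v - s *\<^sub>R x \<in> regular_subdiff ?H x"
    by (simp add: minus_ereal_def)
  moreover have "?H z \<noteq> -\<infinity>"
    using hz by (cases "h z") auto
  ultimately have "?H x + ereal (inner (v - s *\<^sub>R x) (z - x)) \<le> ?H z"
    using ereal_convex_on_regular_subgradient[OF cv x z] by blast
  moreover obtain hx where "h x = ereal hx"
    using v by (cases "h x") (auto simp: regular_subdiff_iff)
  ultimately show ?thesis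
    using hz unfolding power2_norm_eq_inner
    by (cases "h z") (auto simp: inner_diff inner_commute algebra_simps)
qed

lemma limiting_subgradient_quadratic_minorant:
  assumes cv: "ereal_convex_on U (\<lambda>x. h x - ereal (s / 2 * (norm x)\<^sup>2))"
    and U: "open U" and x: "x \<in> U" and z: "z \<in> U" and hz: "h z \<noteq> -\<infinity>"
    and v: "v \<in> limiting_subdiff h x"
  shows "h x + ereal (inner v (z - x) + s / 2 * (norm (z - x))\<^sup>2) \<le> h z"
proof -
  obtain xk vk where xk: "xk \<longlonglongrightarrow> x" and hk: "(\<lambda>k. h (xk k)) \<longlonglongrightarrow> h x"
    and vk: "vk \<longlonglongrightarrow> v" and reg: "\<And>k. vk k \<in> regular_subdiff h (xk k)"
    using v limiting_subdiff_finite[OF v] by (auto simp: limiting_subdiff_def)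
  have "eventually (\<lambda>k. xk k \<in> U) sequentially"
    using topological_tendstoD[OF xk U x] .
  then have "eventually (\<lambda>k. h (xk k)
      + ereal (inner (vk k) (z - xk k) + s / 2 * (norm (z - xk k))\<^sup>2) \<le> h z) sequentially"
    by eventually_elim (rule regular_subgradient_quadratic_minorant[OF cv _ z hz reg])
  moreover have "(\<lambda>k. h (xk k) + ereal (inner (vk k) (z - xk k) + s / 2 * (norm (z - xk k))\<^sup>2))
      \<longlonglongrightarrow> h x + ereal (inner v (z - x) + s / 2 * (norm (z - x))\<^sup>2)"
    by (intro tendsto_add_ereal_general1 hk) (auto intro!: tendsto_intros xk vk)
  ultimately show ?thesis
    by (intro tendsto_le[OF _ tendsto_const]) auto
qed

lemma limiting_subgradient_value_le:
  assumes cv: "ereal_convex_on U (\<lambda>x. h x - ereal (s / 2 * (norm x)\<^sup>2))"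
    and U: "open U" and x: "x \<in> U" and z: "z \<in> U" and hz: "h z = ereal c"
    and v: "v \<in> limiting_subdiff h x"
  shows "h x \<le> ereal (c + norm v * norm (x - z) + \<bar>s\<bar> / 2 * (norm (x - z))\<^sup>2)"
proof -
  have "h x + ereal (inner v (z - x) + s / 2 * (norm (z - x))\<^sup>2) \<le> ereal c"
    using limiting_subgradient_quadratic_minorant[OF cv U x z _ v] hz by simp
  moreover have "- inner v (z - x) \<le> norm v * norm (x - z)"
    using Cauchy_Schwarz_ineq2[of v "z - x"] by (simp add: norm_minus_commute)
  moreover have "- (s / 2 * (norm (z - x))\<^sup>2) \<le> \<bar>s\<bar> / 2 * (norm (x - z))\<^sup>2"
    using mult_right_mono[of "- s" "\<bar>s\<bar>" "(norm (x - z))\<^sup>2"] by (simp add: norm_minus_commute)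
  moreover obtain hx where "h x = ereal hx"
    using limiting_subdiff_finite[OF v] by (cases "h x") auto
  ultimately show ?thesis
    by simp
qed

lemma eventually_limiting_subgradient_value_less:
  assumes cv: "ereal_convex_on U (\<lambda>x. h x - ereal (s / 2 * (norm x)\<^sup>2))"
    and U: "open U" "z \<in> U" and hz: "h z = ereal c" and \<epsilon>: "\<epsilon> > 0"
  shows "eventually (\<lambda>x. \<forall>v. norm v \<le> R \<longrightarrow> v \<in> limiting_subdiff h x \<longrightarrow> h x < ereal (c + \<epsilon>))
    (nhds z)"
proof -
  have "((\<lambda>x. R * norm (x - z) + \<bar>s\<bar> / 2 * (norm (x - z))\<^sup>2) \<longlongrightarrow>
      R * norm (z - z) + \<bar>s\<bar> / 2 * (norm (z - z))\<^sup>2) (nhds z)"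
    by (intro tendsto_intros filterlim_ident)
  then have "eventually (\<lambda>x. R * norm (x - z) + \<bar>s\<bar> / 2 * (norm (x - z))\<^sup>2 < \<epsilon>) (nhds z)"
    using \<epsilon> by (intro order_tendstoD(2)) auto
  moreover have "eventually (\<lambda>x. x \<in> U) (nhds z)"
    using U by (rule eventually_nhds_in_open)
  ultimately show ?thesis
  proof eventually_elim
    case (elim x)
    show ?case
    proof (intro allI impI)
      fix v assume "norm v \<le> R" and v: "v \<in> limiting_subdiff h x"
      have "h x \<le> ereal (c + norm v * norm (x - z) + \<bar>s\<bar> / 2 * (norm (x - z))\<^sup>2)"
        using limiting_subgradient_value_le[OF cv U(1) elim(2) U(2) hz v] .
      also have "\<dots> < ereal (c + \<epsilon>)"
        using mult_right_mono[OF \<open>norm v \<le> R\<close> norm_ge_zero[of "x - z"]] elim(1) by simp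
      finally show "h x < ereal (c + \<epsilon>)" .
    qed
  qed
qed

lemma certifies_var_convex_add_smoothI:
  fixes g :: "'a::euclidean_space \<Rightarrow> real" and G :: "'a \<Rightarrow> 'a"
  assumes cert: "certifies_var_convex s f xb xbs fh U V \<rho>"
    and g: "\<And>y. (g has_derivative (\<lambda>v. inner (G y) v)) (at y)"
    and G: "\<And>y. isCont G y"
    and g_conv: "convex_on U (\<lambda>x. g x - t / 2 * (norm x)\<^sup>2)"
    and Uh: "open Uh" "convex Uh" "xb \<in> Uh" "Uh \<subseteq> U"
    and Vh: "open Vh" "convex Vh" "xbs + G xb \<in> Vh"
    and \<rho>h: "f xb + ereal (g xb) < ereal \<rho>h"
    and shift: "\<And>x xs. x \<in> Uh \<Longrightarrow> xs \<in> Vh \<Longrightarrow> xs - G x \<in> V"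
    and level: "\<And>x. x \<in> Uh \<Longrightarrow> \<rho>h \<le> \<rho> + g x"
    and bound: "\<And>x xs. x \<in> Uh \<Longrightarrow> xs \<in> Vh \<Longrightarrow> xs - G x \<in> limiting_subdiff fh x
      \<Longrightarrow> fh x + ereal (g x) < ereal \<rho>h"
  shows "certifies_var_convex (s + t) (\<lambda>x. f x + ereal (g x)) xb (xbs + G xb)
    (\<lambda>x. fh x + ereal (g x)) Uh Vh \<rho>h"
proof -
  let ?\<psi> = "\<lambda>x. f x + ereal (g x)" and ?\<psi>h = "\<lambda>x. fh x + ereal (g x)"
  have fh_lsc: "lsc fh" and fh_proper: "\<And>x. fh x \<noteq> -\<infinity>"
    and fh_conv: "ereal_convex_on U (\<lambda>x. fh x - ereal (s / 2 * (norm x)\<^sup>2))"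
    and fh_le: "\<And>x. x \<in> U \<Longrightarrow> fh x \<le> f x"
    and graph_eq: "\<And>x v. x \<in> U \<Longrightarrow> v \<in> V \<Longrightarrow>
      (v \<in> limiting_subdiff f x \<and> f x < ereal \<rho>) \<longleftrightarrow> v \<in> limiting_subdiff fh x"
    and value_eq: "\<And>x v. x \<in> U \<Longrightarrow> v \<in> V \<Longrightarrow> v \<in> limiting_subdiff f x \<Longrightarrow> f x < ereal \<rho>
      \<Longrightarrow> f x = fh x"
    using cert unfolding certifies_var_convex_def gph_rho_subdiff_def gph_subdiff_def by blast+
  have local_graph: "(xs \<in> limiting_subdiff ?\<psi> x \<and> ?\<psi> x < ereal \<rho>h \<longleftrightarrow> xs \<in> limiting_subdiff ?\<psi>h x)
      \<and> (xs \<in> limiting_subdiff ?\<psi> x \<and> ?\<psi> x < ereal \<rho>h \<longrightarrow> ?\<psi> x = ?\<psi>h x)"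
    if x: "x \<in> Uh" and xs: "xs \<in> Vh" for x xs
  proof -
    have xU: "x \<in> U" and vV: "xs - G x \<in> V"
      using x xs Uh(4) shift by auto
    have "f x < ereal \<rho>" if "?\<psi> x < ereal \<rho>h"
      using that level[OF x] by (cases "f x") auto
    moreover have "?\<psi> x < ereal \<rho>h" if "xs - G x \<in> limiting_subdiff fh x"
      using that bound[OF x xs] graph_eq[OF xU vV] value_eq[OF xU vV] by auto
    ultimately show ?thesis
      using graph_eq[OF xU vV] value_eq[OF xU vV]
      by (auto simp: limiting_subdiff_add_smooth[OF g G])
  qed
  show ?thesis
    unfolding certifies_var_convex_def
  proof (intro conjI)
    show "lsc ?\<psi>h"
      using lsc_add_continuous[OF fh_lsc has_derivative_continuous[OF g]] .
    show "\<forall>x. ?\<psi>h x \<noteq> -\<infinity>"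
      using fh_proper by simp
    have "ereal_convex_on U (\<lambda>x. ?\<psi>h x - ereal ((s + t) / 2 * (norm x)\<^sup>2))"
      using ereal_convex_on_minus_sq_add[OF fh_conv fh_proper g_conv] .
    then show "ereal_convex_on Uh (\<lambda>x. ?\<psi>h x - ereal ((s + t) / 2 * (norm x)\<^sup>2))"
      using Uh(4) by (rule ereal_convex_on_subset)
    show "\<forall>x\<in>Uh. ?\<psi>h x \<le> ?\<psi> x"
      using Uh(4) fh_le by (auto intro: add_right_mono)
    show "gph_rho_subdiff ?\<psi> \<rho>h \<inter> (Uh \<times> Vh) = gph_subdiff ?\<psi>h \<inter> (Uh \<times> Vh)"
      using local_graph unfolding gph_rho_subdiff_def gph_subdiff_def by blast
    show "\<forall>(x, xs) \<in> gph_rho_subdiff ?\<psi> \<rho>h \<inter> (Uh \<times> Vh). ?\<psi> x = ?\<psi>h x"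
      using local_graph unfolding gph_rho_subdiff_def by blast
  qed (use Uh Vh \<rho>h in auto)
qed

lemma certifies_var_convex_base_value:
  assumes cert: "certifies_var_convex s f xb xbs fh U V \<rho>"
    and xbs: "xbs \<in> limiting_subdiff f xb"
  shows "fh xb = f xb"
proof -
  have base: "xb \<in> U" "xbs \<in> V" "f xb < ereal \<rho>"
    and values_agree: "\<forall>(x, xs) \<in> gph_rho_subdiff f \<rho> \<inter> (U \<times> V). f x = fh x"
    using cert unfolding certifies_var_convex_def by blast+
  have "(xb, xbs) \<in> gph_rho_subdiff f \<rho> \<inter> (U \<times> V)"
    using base xbs by (simp add: gph_rho_subdiff_def)
  with values_agree show ?thesis
    by (drule_tac bspec) auto
qed

lemma certifies_var_convex_add_smooth:
  fixes g :: "'a::euclidean_space \<Rightarrow> real" and G :: "'a \<Rightarrow> 'a"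
  assumes cert: "certifies_var_convex s f xb xbs fh U V \<rho>"
    and xbs: "xbs \<in> limiting_subdiff f xb"
    and g: "\<And>y. (g has_derivative (\<lambda>v. inner (G y) v)) (at y)"
    and G: "\<And>y. isCont G y"
    and g_conv: "convex_on U (\<lambda>x. g x - t / 2 * (norm x)\<^sup>2)"
  shows "\<exists>Uh Vh \<rho>h. certifies_var_convex (s + t) (\<lambda>x. f x + ereal (g x)) xb (xbs + G xb)
            (\<lambda>x. fh x + ereal (g x)) Uh Vh \<rho>h"
proof -
  have U: "open U" "xb \<in> U" and V: "open V" "xbs \<in> V" and \<rho>: "f xb < ereal \<rho>"
    and fh_conv: "ereal_convex_on U (\<lambda>x. fh x - ereal (s / 2 * (norm x)\<^sup>2))"
    using cert unfolding certifies_var_convex_def by auto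
  have fh_xb: "fh xb = f xb"
    using certifies_var_convex_base_value[OF cert xbs] .
  obtain fb where fb: "f xb = ereal fb"
    using limiting_subdiff_finite[OF xbs] by (cases "f xb") auto
  obtain e where e: "e > 0" "ball xbs e \<subseteq> V"
    using V open_contains_ball by blast
  define gap where "gap = \<rho> - fb"
  have gap: "gap > 0"
    using \<rho> fb by (simp add: gap_def)
  have "eventually (\<lambda>x. x \<in> U \<and> dist (g x) (g xb) < gap / 4 \<and> dist (G x) (G xb) < e / 2 \<and>
      (\<forall>v. norm v \<le> norm xbs + e \<longrightarrow> v \<in> limiting_subdiff fh x \<longrightarrow> fh x < ereal (fb + gap / 4)))
    (nhds xb)"
  proof (intro eventually_conj)
    show "eventually (\<lambda>x. x \<in> U) (nhds xb)"
      using U by (intro eventually_nhds_in_open)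
    show "eventually (\<lambda>x. dist (g x) (g xb) < gap / 4) (nhds xb)"
      using tendstoD[OF has_derivative_continuous[OF g, unfolded isCont_def], of "gap / 4"] gap
      unfolding eventually_nhds_conv_at by simp
    show "eventually (\<lambda>x. dist (G x) (G xb) < e / 2) (nhds xb)"
      using tendstoD[OF G[of xb, unfolded isCont_def], of "e / 2"] e
      unfolding eventually_nhds_conv_at by simp
    show "eventually (\<lambda>x. \<forall>v. norm v \<le> norm xbs + e \<longrightarrow> v \<in> limiting_subdiff fh x
        \<longrightarrow> fh x < ereal (fb + gap / 4)) (nhds xb)"
      using gap fh_xb fb by (intro eventually_limiting_subgradient_value_less[OF fh_conv U]) auto
  qed
  then obtain r where r: "r > 0" and near: "\<And>x. dist x xb < r \<Longrightarrow> x \<in> U \<and>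
      dist (g x) (g xb) < gap / 4 \<and> dist (G x) (G xb) < e / 2 \<and>
      (\<forall>v. norm v \<le> norm xbs + e \<longrightarrow> v \<in> limiting_subdiff fh x \<longrightarrow> fh x < ereal (fb + gap / 4))"
    unfolding eventually_nhds_metric by blast
  have g_near: "g x < g xb + gap / 4" "g xb < g x + gap / 4" if "x \<in> ball xb r" for x
  proof -
    have "dist (g x) (g xb) < gap / 4"
      using near[of x] that by (simp add: dist_commute)
    then show "g x < g xb + gap / 4" "g xb < g x + gap / 4"
      unfolding dist_real_def by arith+
  qed
  have shift: "xs - G x \<in> ball xbs e"
    if "x \<in> ball xb r" "xs \<in> ball (xbs + G xb) (e / 2)" for x xs
  proof -
    have "dist xbs (xs - G x) \<le> dist (xbs + G xb) xs + dist (G x) (G xb)"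
      unfolding dist_norm by (rule order.trans[OF _ norm_triangle_ineq]) (simp add: algebra_simps)
    also have "\<dots> < e / 2 + e / 2"
      using that near by (intro add_strict_mono) (auto simp: dist_commute)
    finally show ?thesis
      by simp
  qed
  have "certifies_var_convex (s + t) (\<lambda>x. f x + ereal (g x)) xb (xbs + G xb)
      (\<lambda>x. fh x + ereal (g x)) (ball xb r) (ball (xbs + G xb) (e / 2)) (fb + g xb + gap / 2)"
  proof (rule certifies_var_convex_add_smoothI[OF cert g G g_conv])
    show "ball xb r \<subseteq> U"
      using near by (auto simp: dist_commute)
    show "x \<in> ball xb r \<Longrightarrow> xs \<in> ball (xbs + G xb) (e / 2) \<Longrightarrow> xs - G x \<in> V" for x xs
      using shift e by blast
    show "fb + g xb + gap / 2 \<le> \<rho> + g x" if "x \<in> ball xb r" for x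
      using g_near(2)[OF that] gap gap_def by linarith
    show "fh x + ereal (g x) < ereal (fb + g xb + gap / 2)"
      if "x \<in> ball xb r" "xs \<in> ball (xbs + G xb) (e / 2)" "xs - G x \<in> limiting_subdiff fh x"
      for x xs
    proof -
      have "norm (xs - G x) \<le> norm xbs + e"
        using shift[OF that(1,2)] norm_triangle_ineq2[of "xs - G x" xbs]
        by (simp add: dist_norm norm_minus_commute)
      then have "fh x < ereal (fb + gap / 4)"
        using near[of x] that(1,3) by (simp add: dist_commute)
      then show ?thesis
        using g_near(1)[OF that(1)] by (cases "fh x") auto
    qed
  qed (use r e fb gap in auto)
  then show ?thesis
    by blast
qed

theorem lemma4p2:
  fixes s :: real and f :: "'a::euclidean_space \<Rightarrow> ereal" and xb xbs :: 'a
  assumes f_proper: "\<forall>x. f x \<noteq> -\<infinity>"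
    and f_lsc: "lsc f"
    and xb_dom: "xb \<in> dom_fn f"
    and vc: "var_convex s f xb xbs"
  shows "(\<forall>(t::real) (ys::'a).
            var_convex (s + t)
              (\<lambda>x. f x + ereal (inner ys (x - xb) + t / 2 * (norm (x - xb))\<^sup>2)) xb (xbs + ys))
       \<and> (\<forall>fh U V \<rho>. certifies_var_convex s f xb xbs fh U V \<rho> \<longrightarrow>
            (\<forall>(t::real) (ys::'a). \<exists>Uh Vh \<rho>h.
               certifies_var_convex (s + t)
                 (\<lambda>x. f x + ereal (inner ys (x - xb) + t / 2 * (norm (x - xb))\<^sup>2)) xb (xbs + ys)
                 (\<lambda>x. fh x + ereal (inner ys (x - xb) + t / 2 * (norm (x - xb))\<^sup>2)) Uh Vh \<rho>h
               \<and> ereal \<rho>h > f xb))"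
proof -
  have xbs: "xbs \<in> limiting_subdiff f xb"
    using vc unfolding var_convex_def by blast
  have tilt: "((\<lambda>x. inner ys (x - xb) + t / 2 * (norm (x - xb))\<^sup>2) has_derivative
      (\<lambda>v. inner (ys + t *\<^sub>R (y - xb)) v)) (at y)" for ys t y
    by (rule has_derivative_quadratic_tilt)
  have tilt_gradient: "isCont (\<lambda>y. ys + t *\<^sub>R (y - xb)) y" for ys t y
    by (intro continuous_intros)
  have tilt_cert: "\<exists>Uh Vh \<rho>h.
      certifies_var_convex (s + t)
        (\<lambda>x. f x + ereal (inner ys (x - xb) + t / 2 * (norm (x - xb))\<^sup>2)) xb (xbs + ys)
        (\<lambda>x. fh x + ereal (inner ys (x - xb) + t / 2 * (norm (x - xb))\<^sup>2)) Uh Vh \<rho>h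
      \<and> ereal \<rho>h > f xb"
    if cert: "certifies_var_convex s f xb xbs fh U V \<rho>" for fh U V \<rho> t ys
  proof -
    have "convex U"
      using cert unfolding certifies_var_convex_def by blast
    from certifies_var_convex_add_smooth[OF cert xbs tilt tilt_gradient
        convex_on_quadratic_tilt_minus_sq[OF this, of ys xb t]]
    obtain Uh Vh \<rho>h where c: "certifies_var_convex (s + t)
        (\<lambda>x. f x + ereal (inner ys (x - xb) + t / 2 * (norm (x - xb))\<^sup>2)) xb (xbs + ys)
        (\<lambda>x. fh x + ereal (inner ys (x - xb) + t / 2 * (norm (x - xb))\<^sup>2)) Uh Vh \<rho>h"
      by auto
    moreover have "ereal \<rho>h > f xb"
      using c unfolding certifies_var_convex_def by simp
    ultimately show ?thesis
      by blast
  qed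
  show ?thesis
  proof (intro conjI allI impI)
    fix t ys
    show "var_convex (s + t)
        (\<lambda>x. f x + ereal (inner ys (x - xb) + t / 2 * (norm (x - xb))\<^sup>2)) xb (xbs + ys)"
      unfolding var_convex_def
    proof (intro conjI)
      show "lsc (\<lambda>x. f x + ereal (inner ys (x - xb) + t / 2 * (norm (x - xb))\<^sup>2))"
        using lsc_add_continuous[OF f_lsc has_derivative_continuous[OF tilt]] .
      show "xb \<in> dom_fn (\<lambda>x. f x + ereal (inner ys (x - xb) + t / 2 * (norm (x - xb))\<^sup>2))"
        using xb_dom by (simp add: dom_fn_def)
      show "xbs + ys \<in> limiting_subdiff
          (\<lambda>x. f x + ereal (inner ys (x - xb) + t / 2 * (norm (x - xb))\<^sup>2)) xb"
        unfolding limiting_subdiff_add_smooth[OF tilt tilt_gradient] using xbs by simp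
      show "\<exists>fh U V \<rho>. certifies_var_convex (s + t)
          (\<lambda>x. f x + ereal (inner ys (x - xb) + t / 2 * (norm (x - xb))\<^sup>2)) xb (xbs + ys) fh U V \<rho>"
        using vc tilt_cert unfolding var_convex_def by blast
    qed
  qed (rule tilt_cert)
qed

end
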